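(* Let $0\le\beta<1$ and $\gamma=\frac34+\frac14\beta$, and let $C>0$. There exist constants $c>0$ and $N$ such that for all $n\ge N$, all integers $0\le k\le Cn^{\beta}$, and every multiset $\mathcal{C}$ of $n-k$ unlabelled graphs on $n-1$ vertices, there is a set $J\subseteq\{0,\dots,n-1\}$ with $|J|\ge n-cn^{\gamma}$ such that for any two graphs $G,H$ on $n$ vertices whose decks both contain $\mathcal{C}$ as a sub-multiset, $d_t(G)=d_t(H)$ for every $t\in J$. (That is, from any $n-k$ cards of a graph of order $n$, the number $d_t$ of vertices of degree $t$ can be determined exactly for all but $O(n^\gamma)$ values of $t$.)
   Context: All graphs are finite, simple and undirected. For a graph $G'$ and integer $t$, $d_t(G')$ is the number of vertices of degree $t$ in $G'$. For $v\in V(G)$, the card $G-v$ is obtained by deleting $v$ and its incident edges; the deck $\mathcal{D}(G)$ is the multiset of the $n$ cards $G-v$, $v\in V(G)$, up to isomorphism. *)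

theory Defs
  imports Complex_Main "HOL-Library.Multiset"
begin

definition is_graph :: "nat \<Rightarrow> nat set set \<Rightarrow> bool" where
  "is_graph n E \<longleftrightarrow> (\<forall>e\<in>E. e \<subseteq> {0..<n} \<and> card e = 2)"

definition graph_iso :: "nat \<Rightarrow> nat set set \<Rightarrow> nat set set \<Rightarrow> bool" where
  "graph_iso n E F \<longleftrightarrow> (\<exists>f. bij_betw f {0..<n} {0..<n} \<and> F = (\<lambda>e. f ` e) ` E)"

text \<open>Isomorphism class of a graph of order n (an unlabelled graph).\<close>
definition iso_class :: "nat \<Rightarrow> nat set set \<Rightarrow> nat set set set" where
  "iso_class n E = {F. is_graph n F \<and> graph_iso n E F}"

text \<open>The card G - v, relabelled onto {0..<n-1}.\<close>
definition card_del :: "nat set set \<Rightarrow> nat \<Rightarrow> nat set set" where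
  "card_del E v = (\<lambda>e. (\<lambda>u. if u < v then u else u - 1) ` e) ` {e\<in>E. v \<notin> e}"

definition deck :: "nat \<Rightarrow> nat set set \<Rightarrow> nat set set set multiset" where
  "deck n E = image_mset (\<lambda>v. iso_class (n - 1) (card_del E v)) (mset_set {0..<n})"

definition degree :: "nat set set \<Rightarrow> nat \<Rightarrow> nat" where
  "degree E v = card {e\<in>E. v \<in> e}"

definition deg_count :: "nat \<Rightarrow> nat set set \<Rightarrow> nat \<Rightarrow> nat" where
  "deg_count n E t = card {v\<in>{0..<n}. degree E v = t}"

end

theory Submission
  imports Defs
begin

text \<open>Kelly's counting argument gives, for a graph G of order n with a_t = d_t(G),
  sum over all cards of d_t(G - v) = (n - 1 - t) a_t + (t + 1) a_(t+1).
  Summing over the n - k known cards only perturbs this by at most k (a_t + a_(t+1)), and a_t is at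
  most 1 + d_t(F) + d_(t-1)(F) for any known card F. So for two graphs G, H with the known cards, the
  difference D_t = d_t(G) - d_t(H) satisfies |(n - k - 1 - t) D_t + (t + 1) D_(t+1)| <= R_t with
  sum of R_t = O(k n). Below the middle degree (n - k)/2 this recurrence expresses D_t through D_(t+1),
  above it D_(t+1) through D_t, with ratio at most 1 - w/n at distance 2w from the middle. Unrolling
  from the trivial bound |D| <= n, one gets |D_t| < 1, hence D_t = 0, outside a middle window of
  width O(w + k) and O((n/w) k) further degrees. The choice w ~ n^(3/4 + beta/4) balances these.\<close>

section \<open>Degree counts of cards\<close>

lemma card_image_edges:
  assumes "inj_on g A" "\<forall>e\<in>E. e \<subseteq> A"
  shows "card ((\<lambda>e. g ` e) ` E) = card E"
proof -
  have "inj_on (\<lambda>e. g ` e) E"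
  proof (rule inj_onI)
    fix x y assume "x \<in> E" "y \<in> E" "g ` x = g ` y"
    thus "x = y" using inj_on_image_eq_iff[OF assms(1)] assms(2) by blast
  qed
  thus ?thesis by (rule card_image)
qed

lemma degree_image_edges:
  assumes "inj_on g A" "\<forall>e\<in>E. e \<subseteq> A" "w \<in> A"
  shows "degree ((\<lambda>e. g ` e) ` E) (g w) = degree E w"
proof -
  have "{e' \<in> (\<lambda>e. g ` e) ` E. g w \<in> e'} = (\<lambda>e. g ` e) ` {e\<in>E. w \<in> e}"
  proof (intro equalityI subsetI)
    fix e' assume "e' \<in> {e' \<in> (\<lambda>e. g ` e) ` E. g w \<in> e'}"
    then obtain e where e: "e \<in> E" "e' = g ` e" "g w \<in> g ` e" by auto
    hence "w \<in> e" using inj_on_image_mem_iff[OF assms(1) assms(3)] assms(2) by auto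
    thus "e' \<in> (\<lambda>e. g ` e) ` {e\<in>E. w \<in> e}" using e by auto
  qed auto
  thus ?thesis
    unfolding degree_def using card_image_edges[OF assms(1)] assms(2) by simp
qed

lemma deg_count_graph_iso:
  assumes "is_graph p F" "graph_iso p F F'"
  shows "deg_count p F' t = deg_count p F t"
proof -
  obtain f where f: "bij_betw f {0..<p} {0..<p}" and F': "F' = (\<lambda>e. f ` e) ` F"
    using assms(2) graph_iso_def by auto
  have edges: "\<forall>e\<in>F. e \<subseteq> {0..<p}" using assms(1) is_graph_def by auto
  have inj: "inj_on f {0..<p}" using f bij_betw_def by auto
  have "{x\<in>{0..<p}. degree F' x = t} = f ` {w\<in>{0..<p}. degree F w = t}"
  proof (intro equalityI subsetI)
    fix x assume x: "x \<in> {x \<in> {0..<p}. degree F' x = t}"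
    then obtain w where w: "w \<in> {0..<p}" "x = f w"
      using bij_betw_imp_surj_on[OF f] by (metis (no_types, lifting) imageE mem_Collect_eq)
    thus "x \<in> f ` {w \<in> {0..<p}. degree F w = t}"
      using x degree_image_edges[OF inj edges w(1)] F' by auto
  next
    fix x assume "x \<in> f ` {w \<in> {0..<p}. degree F w = t}"
    then obtain w where w: "w \<in> {0..<p}" "degree F w = t" "x = f w" by auto
    thus "x \<in> {x \<in> {0..<p}. degree F' x = t}"
      using degree_image_edges[OF inj edges w(1)] F' bij_betw_apply[OF f] by auto
  qed
  hence "deg_count p F' t = card (f ` {w\<in>{0..<p}. degree F w = t})"
    unfolding deg_count_def by simp
  also have "\<dots> = deg_count p F t"
    unfolding deg_count_def by (rule card_image) (rule inj_on_subset[OF inj], auto)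
  finally show ?thesis .
qed

lemma graph_iso_refl: "graph_iso p F F"
  unfolding graph_iso_def by (rule exI[of _ id]) auto

text \<open>Well defined since the degree count is an isomorphism invariant (deg_count_graph_iso).\<close>
definition deg_count_class :: "nat \<Rightarrow> nat set set set \<Rightarrow> nat \<Rightarrow> nat" where
  "deg_count_class p X t = deg_count p (SOME F. F \<in> X) t"

lemma deg_count_class_iso_class:
  assumes "is_graph p F"
  shows "deg_count_class p (iso_class p F) t = deg_count p F t"
proof -
  have "F \<in> iso_class p F" using assms graph_iso_refl unfolding iso_class_def by auto
  hence "(SOME F'. F' \<in> iso_class p F) \<in> iso_class p F" by (rule someI)
  hence "graph_iso p F (SOME F'. F' \<in> iso_class p F)" unfolding iso_class_def by auto
  thus ?thesis unfolding deg_count_class_def using deg_count_graph_iso[OF assms] by simp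
qed

definition relabel_del :: "nat \<Rightarrow> nat \<Rightarrow> nat" where
  "relabel_del v u = (if u < v then u else u - 1)"

lemma card_del_eq_image: "card_del E v = (\<lambda>e. relabel_del v ` e) ` {e\<in>E. v \<notin> e}"
  unfolding card_del_def relabel_del_def by simp

lemma inj_on_relabel_del: "inj_on (relabel_del v) (UNIV - {v})"
  unfolding inj_on_def relabel_del_def by auto

lemma bij_betw_relabel_del:
  assumes "v < n"
  shows "bij_betw (relabel_del v) ({0..<n} - {v}) {0..<n-1}"
proof (rule bij_betw_imageI)
  show "inj_on (relabel_del v) ({0..<n} - {v})" by (rule inj_on_subset[OF inj_on_relabel_del]) auto
  show "relabel_del v ` ({0..<n} - {v}) = {0..<n - 1}"
  proof
    show "relabel_del v ` ({0..<n} - {v}) \<subseteq> {0..<n - 1}"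
      using assms by (auto simp: relabel_del_def)
    show "{0..<n - 1} \<subseteq> relabel_del v ` ({0..<n} - {v})"
    proof
      fix x assume x: "x \<in> {0..<n - 1}"
      show "x \<in> relabel_del v ` ({0..<n} - {v})"
      proof (cases "x < v")
        case True
        thus ?thesis using x assms by (intro image_eqI[of _ _ x]) (auto simp: relabel_del_def)
      next
        case False
        thus ?thesis using x assms by (intro image_eqI[of _ _ "x+1"]) (auto simp: relabel_del_def)
      qed
    qed
  qed
qed

lemma is_graph_finite: "is_graph n G \<Longrightarrow> finite G"
  unfolding is_graph_def by (meson Pow_iff finite_Pow_iff finite_atLeastLessThan finite_subset subsetI)

lemma is_graph_card_del:
  assumes "is_graph n G" "v < n"
  shows "is_graph (n-1) (card_del G v)"
  unfolding is_graph_def card_del_eq_image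
proof
  fix e' assume "e' \<in> (\<lambda>e. relabel_del v ` e) ` {e \<in> G. v \<notin> e}"
  then obtain e where e: "e \<in> G" "v \<notin> e" "e' = relabel_del v ` e" by auto
  have e_sub: "e \<subseteq> {0..<n} - {v}" using e assms(1) is_graph_def by auto
  have "e' \<subseteq> {0..<n-1}"
    using e(3) e_sub bij_betw_imp_surj_on[OF bij_betw_relabel_del[OF assms(2)]] by auto
  moreover have "card e' = 2" using e e_sub assms(1) is_graph_def
    card_image[OF inj_on_subset[OF inj_on_relabel_del[of v], of e]] by auto
  ultimately show "e' \<subseteq> {0..<n - 1} \<and> card e' = 2" by auto
qed

lemma edges_containing_both:
  assumes "is_graph n G" "u \<noteq> v"
  shows "{e\<in>G. u \<in> e \<and> v \<in> e} = (if {u,v} \<in> G then {{u,v}} else {})"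
proof -
  have "e = {u,v}" if "e \<in> G" "u \<in> e" "v \<in> e" for e
  proof -
    have "card e = 2" using that assms is_graph_def by auto
    then obtain x y where "e = {x,y}" by (auto simp: card_2_iff)
    thus ?thesis using that assms(2) by auto
  qed
  note unique = this
  show ?thesis
  proof (cases "{u,v} \<in> G")
    case True
    have "{e\<in>G. u \<in> e \<and> v \<in> e} = {{u,v}}"
    proof (intro equalityI subsetI)
      fix x assume "x \<in> {e\<in>G. u \<in> e \<and> v \<in> e}" thus "x \<in> {{u,v}}" using unique by simp
    qed (use True in simp)
    thus ?thesis using True by simp
  next
    case False
    thus ?thesis using unique by force
  qed
qed

lemma degree_card_del:
  assumes "is_graph n G" "v < n" "u < n" "u \<noteq> v"
  shows "degree (card_del G v) (relabel_del v u) = degree G u - (if {u,v} \<in> G then 1 else 0)"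
proof -
  have "degree (card_del G v) (relabel_del v u) = degree {e\<in>G. v \<notin> e} u"
    unfolding card_del_eq_image
    by (rule degree_image_edges[OF inj_on_relabel_del]) (use assms in auto)
  also have "\<dots> = card {e\<in>G. v \<notin> e \<and> u \<in> e}"
    unfolding degree_def by (rule arg_cong[where f=card]) auto
  finally have "degree (card_del G v) (relabel_del v u) = card {e\<in>G. v \<notin> e \<and> u \<in> e}" .
  moreover have "degree G u = card {e\<in>G. v \<notin> e \<and> u \<in> e} + card {e\<in>G. u \<in> e \<and> v \<in> e}"
  proof -
    have "{e\<in>G. u \<in> e} = {e\<in>G. v \<notin> e \<and> u \<in> e} \<union> {e\<in>G. u \<in> e \<and> v \<in> e}" by auto
    thus ?thesis unfolding degree_def
      by (subst card_Un_disjoint[symmetric]) (use is_graph_finite[OF assms(1)] in auto)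
  qed
  ultimately show ?thesis using edges_containing_both[OF assms(1,4)] by simp
qed

lemma deg_count_card_del:
  assumes "is_graph n G" "v < n"
  shows "deg_count (n-1) (card_del G v) t
       = card {u\<in>{0..<n}-{v}. degree G u - (if {u,v}\<in>G then 1 else 0) = t}"
proof -
  have bij: "bij_betw (relabel_del v) ({0..<n} - {v}) {0..<n-1}" by (rule bij_betw_relabel_del[OF assms(2)])
  have "{x\<in>{0..<n-1}. degree (card_del G v) x = t} =
        relabel_del v ` {u\<in>{0..<n}-{v}. degree G u - (if {u,v}\<in>G then 1 else 0) = t}"
  proof
    show "{x\<in>{0..<n-1}. degree (card_del G v) x = t} \<subseteq>
        relabel_del v ` {u\<in>{0..<n}-{v}. degree G u - (if {u,v}\<in>G then 1 else 0) = t}"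
    proof
      fix x assume x: "x \<in> {x\<in>{0..<n-1}. degree (card_del G v) x = t}"
      then obtain u where "u \<in> {0..<n}-{v}" "x = relabel_del v u"
        using bij_betw_imp_surj_on[OF bij] by (metis (no_types, lifting) imageE mem_Collect_eq)
      thus "x \<in> relabel_del v ` {u\<in>{0..<n}-{v}. degree G u - (if {u,v}\<in>G then 1 else 0) = t}"
        using x degree_card_del[OF assms, of u] by auto
    qed
    show "relabel_del v ` {u\<in>{0..<n}-{v}. degree G u - (if {u,v}\<in>G then 1 else 0) = t}
        \<subseteq> {x\<in>{0..<n-1}. degree (card_del G v) x = t}"
      using degree_card_del[OF assms] bij_betw_imp_surj_on[OF bij] by auto
  qed
  hence "deg_count (n-1) (card_del G v) t =
      card (relabel_del v ` {u\<in>{0..<n}-{v}. degree G u - (if {u,v}\<in>G then 1 else 0) = t})"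
    unfolding deg_count_def by simp
  also have "\<dots> = card {u\<in>{0..<n}-{v}. degree G u - (if {u,v}\<in>G then 1 else 0) = t}"
    by (rule card_image, rule inj_on_subset[OF inj_on_relabel_del]) auto
  finally show ?thesis .
qed

section \<open>Kelly's identity for partial decks\<close>

definition neighbours :: "nat set set \<Rightarrow> nat \<Rightarrow> nat \<Rightarrow> nat set" where
  "neighbours G n u = {v\<in>{0..<n}. {u,v} \<in> G}"

lemma card_neighbours:
  assumes "is_graph n G" "u < n"
  shows "card (neighbours G n u) = degree G u"
proof -
  have "bij_betw (\<lambda>v. {u,v}) (neighbours G n u) {e\<in>G. u \<in> e}"
  proof (rule bij_betw_imageI)
    show "inj_on (\<lambda>v. {u, v}) (neighbours G n u)" unfolding inj_on_def by (auto simp: doubleton_eq_iff)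
    show "(\<lambda>v. {u, v}) ` neighbours G n u = {e \<in> G. u \<in> e}"
    proof
      show "(\<lambda>v. {u, v}) ` neighbours G n u \<subseteq> {e \<in> G. u \<in> e}" unfolding neighbours_def by auto
      show "{e \<in> G. u \<in> e} \<subseteq> (\<lambda>v. {u, v}) ` neighbours G n u"
      proof
        fix e assume e: "e \<in> {e \<in> G. u \<in> e}"
        hence "card e = 2" "e \<subseteq> {0..<n}" using assms is_graph_def by auto
        then obtain x y where "e = {x,y}" by (auto simp: card_2_iff)
        then obtain w where w: "e = {u,w}" using e by auto
        have "w \<in> neighbours G n u" unfolding neighbours_def using w e \<open>e \<subseteq> {0..<n}\<close> by auto
        thus "e \<in> (\<lambda>v. {u, v}) ` neighbours G n u" using w by auto
      qed
    qed
  qed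
  thus ?thesis unfolding degree_def by (simp add: bij_betw_same_card)
qed

lemma neighbours_subset:
  assumes "is_graph n G"
  shows "neighbours G n u \<subseteq> {0..<n} - {u}"
proof -
  have "{u,u} \<notin> G" using assms unfolding is_graph_def by auto
  thus ?thesis unfolding neighbours_def by auto
qed

lemma card_card_del_degree_eq:
  assumes "is_graph n G" "u < n"
  shows "card {v\<in>{0..<n}. u \<noteq> v \<and> degree G u - (if {u,v}\<in>G then 1 else 0) = t}
       = (if degree G u = t then n - 1 - t else 0) + (if degree G u = t + 1 then t + 1 else 0)"
proof -
  let ?S = "{v\<in>{0..<n}. u \<noteq> v \<and> degree G u - (if {u,v}\<in>G then 1 else 0) = t}"
  have sub: "neighbours G n u \<subseteq> {0..<n} - {u}" by (rule neighbours_subset[OF assms(1)])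
  have card_nb: "card (neighbours G n u) = degree G u" by (rule card_neighbours[OF assms])
  consider "degree G u = t" | "degree G u = t + 1" | "degree G u \<noteq> t" "degree G u \<noteq> t + 1"
    by blast
  thus ?thesis
  proof cases
    case 1
    have "degree G u \<ge> 1" if "v < n" "{u,v} \<in> G" for v
    proof -
      have "v \<in> neighbours G n u" using that unfolding neighbours_def by auto
      hence "card (neighbours G n u) > 0" unfolding neighbours_def by (auto simp: card_gt_0_iff)
      thus ?thesis using card_nb by simp
    qed
    hence "?S = ({0..<n} - {u}) - neighbours G n u"
      using 1 unfolding neighbours_def by (auto split: if_splits) fastforce+
    hence "card ?S = (n - 1) - t" using 1 card_nb sub assms(2)
      by (simp add: card_Diff_subset finite_subset)
    thus ?thesis using 1 by simp
  next
    case 2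
    have "?S = neighbours G n u" using 2 sub unfolding neighbours_def by (auto split: if_splits)
    thus ?thesis using 2 card_nb by simp
  next
    case 3
    have "?S = {}" using 3 by (auto split: if_splits)
    thus ?thesis using 3 by simp
  qed
qed

lemma sum_deg_count_card_del:
  assumes "is_graph n G"
  shows "(\<Sum>v<n. deg_count (n-1) (card_del G v) t)
       = (n - 1 - t) * deg_count n G t + (t + 1) * deg_count n G (t + 1)"
proof -
  let ?P = "\<lambda>u v. u \<noteq> v \<and> degree G u - (if {u,v}\<in>G then 1 else 0) = t"
  have "(\<Sum>v<n. deg_count (n-1) (card_del G v) t) = (\<Sum>v<n. \<Sum>u<n. of_bool (?P u v))"
  proof (rule sum.cong[OF refl])
    fix v assume "v \<in> {..<n}"
    hence "deg_count (n-1) (card_del G v) t = card {u\<in>{0..<n}-{v}. degree G u - (if {u,v}\<in>G then 1 else 0) = t}"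
      using deg_count_card_del[OF assms] by simp
    also have "\<dots> = card ({..<n} \<inter> {u. ?P u v})" by (rule arg_cong[where f=card]) auto
    finally show "deg_count (n-1) (card_del G v) t = (\<Sum>u<n. of_bool (?P u v))" by simp
  qed
  also have "\<dots> = (\<Sum>u<n. \<Sum>v<n. of_bool (?P u v))"
    by (rule sum.swap)
  also have "\<dots> = (\<Sum>u<n. of_bool (degree G u = t) * (n - 1 - t) + of_bool (degree G u = t + 1) * (t + 1))"
  proof (rule sum.cong[OF refl])
    fix u assume u: "u \<in> {..<n}"
    have "(\<Sum>v<n. of_bool (?P u v)) = card ({..<n} \<inter> {v. ?P u v})" by simp
    also have "\<dots> = card {v\<in>{0..<n}. ?P u v}" by (rule arg_cong[where f=card]) auto
    also have "\<dots> = (if degree G u = t then n - 1 - t else 0) + (if degree G u = t + 1 then t + 1 else 0)"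
      using card_card_del_degree_eq[OF assms, of u t] u by simp
    finally show "(\<Sum>v<n. of_bool (?P u v)) =
        of_bool (degree G u = t) * (n - 1 - t) + of_bool (degree G u = t + 1) * (t + 1)" by simp
  qed
  also have "\<dots> = (n - 1 - t) * deg_count n G t + (t + 1) * deg_count n G (t + 1)"
  proof -
    have "(\<Sum>u<n. of_bool (degree G u = s) * c) = c * deg_count n G s" for s c :: nat
    proof -
      have "(\<Sum>u<n. of_bool (degree G u = s) * c) = (\<Sum>u\<in>{..<n} \<inter> {u. degree G u = s}. c)"
        by (rule sum_of_bool_mult_eq) simp
      moreover have "{..<n} \<inter> {u. degree G u = s} = {u\<in>{0..<n}. degree G u = s}" by auto
      ultimately show ?thesis unfolding deg_count_def by simp
    qed
    note scaled = this
    show ?thesis unfolding sum.distrib scaled ..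
  qed
  finally show ?thesis .
qed

lemma deg_count_card_del_le:
  assumes "is_graph n G" "v < n"
  shows "deg_count (n-1) (card_del G v) t \<le> deg_count n G t + deg_count n G (t + 1)"
proof -
  have "{u\<in>{0..<n}-{v}. degree G u - (if {u,v}\<in>G then 1 else 0) = t} \<subseteq>
        {u\<in>{0..<n}. degree G u = t} \<union> {u\<in>{0..<n}. degree G u = t + 1}"
    by (auto split: if_splits)
  hence "card {u\<in>{0..<n}-{v}. degree G u - (if {u,v}\<in>G then 1 else 0) = t}
      \<le> card ({u\<in>{0..<n}. degree G u = t} \<union> {u\<in>{0..<n}. degree G u = t + 1})"
    by (intro card_mono) auto
  also have "\<dots> \<le> deg_count n G t + deg_count n G (t + 1)"
    unfolding deg_count_def by (rule card_Un_le)
  finally show ?thesis using deg_count_card_del[OF assms] by simp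
qed

lemma deg_count_le_card_del:
  assumes "is_graph n G" "v < n"
  shows "deg_count n G t \<le> 1 + deg_count (n-1) (card_del G v) t + deg_count (n-1) (card_del G v) (t - 1)"
proof -
  define S where "S s = {u\<in>{0..<n}-{v}. degree G u - (if {u,v}\<in>G then 1 else 0) = s}" for s
  have "{u\<in>{0..<n}. degree G u = t} \<subseteq> {v} \<union> S t \<union> S (t - 1)"
    unfolding S_def by (auto split: if_splits)
  hence "deg_count n G t \<le> card ({v} \<union> S t \<union> S (t - 1))"
    unfolding deg_count_def by (intro card_mono) (auto simp: S_def)
  also have "\<dots> \<le> 1 + card (S t) + card (S (t - 1))"
    using card_Un_le[of "{v} \<union> S t" "S (t - 1)"] card_Un_le[of "{v}" "S t"] by simp
  finally show ?thesis using deg_count_card_del[OF assms] unfolding S_def by simp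
qed

lemma deck_memE:
  assumes "X \<in># deck n G"
  obtains v where "v < n" "X = iso_class (n-1) (card_del G v)"
  using assms unfolding deck_def by auto

lemma deg_count_class_card_del:
  assumes "is_graph n G" "v < n"
  shows "deg_count_class (n-1) (iso_class (n-1) (card_del G v)) t = deg_count (n-1) (card_del G v) t"
  by (rule deg_count_class_iso_class[OF is_graph_card_del[OF assms]])

lemma sum_deg_count_class_deck:
  assumes "is_graph n G"
  shows "(\<Sum>X\<in>#deck n G. deg_count_class (n-1) X t)
       = (n - 1 - t) * deg_count n G t + (t + 1) * deg_count n G (t + 1)"
proof -
  have "(\<Sum>X\<in>#deck n G. deg_count_class (n-1) X t) =
        (\<Sum>v\<in>{0..<n}. deg_count_class (n-1) (iso_class (n-1) (card_del G v)) t)"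
    unfolding deck_def by (simp add: image_mset.compositionality sum_unfold_sum_mset o_def)
  also have "\<dots> = (\<Sum>v<n. deg_count (n-1) (card_del G v) t)"
    using deg_count_class_card_del[OF assms] by (auto simp: lessThan_atLeast0 intro: sum.cong)
  finally show ?thesis using sum_deg_count_card_del[OF assms] by simp
qed

text \<open>Kelly's counting identity for the full deck, perturbed by the n - |C| missing cards,
  each of which contributes at most d_t + d_{t+1}.\<close>
lemma partial_deck_deg_count_estimate:
  fixes t :: nat
  assumes G: "is_graph n G" and sub: "image_mset (iso_class (n - 1)) C \<subseteq># deck n G"
    and t: "t < n"
  defines "s \<equiv> (\<Sum>X\<in>#image_mset (iso_class (n - 1)) C. deg_count_class (n-1) X t)"
    and "a \<equiv> real (deg_count n G t)" and "b \<equiv> real (deg_count n G (t + 1))"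
    and "m \<equiv> real (size C)"
  shows "\<bar>real s - ((m - 1 - real t) * a + (real t + 1) * b)\<bar> \<le> (real n - m) * (a + b)"
proof -
  let ?I = "image_mset (iso_class (n - 1)) C"
  define p where "p = (\<Sum>X\<in>#deck n G - ?I. deg_count_class (n-1) X t)"
  have "size (deck n G) = n" unfolding deck_def by simp
  hence size_rest: "size (deck n G - ?I) = n - size C" and mn: "size C \<le> n"
    using sub size_mset_mono[OF sub] by (auto simp: size_Diff_submset)
  have "s + p = (n - 1 - t) * deg_count n G t + (t + 1) * deg_count n G (t + 1)"
    using sum_deg_count_class_deck[OF G, of t] sub
    unfolding s_def p_def by (metis image_mset_union subset_mset.add_diff_inverse sum_mset.union)
  hence "real (s + p) = real ((n - 1 - t) * deg_count n G t + (t + 1) * deg_count n G (t + 1))"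
    by (simp only:)
  moreover have "real (n - 1 - t) = real n - 1 - real t" using t by (simp add: of_nat_diff)
  ultimately have sp: "real s + real p = (real n - 1 - real t) * a + (real t + 1) * b"
    unfolding a_def b_def of_nat_add of_nat_mult by simp
  have "p \<le> (\<Sum>X\<in>#deck n G - ?I. deg_count n G t + deg_count n G (t + 1))"
    unfolding p_def
  proof (rule sum_mset_mono)
    fix X assume "X \<in># deck n G - ?I"
    then obtain v where "v < n" "X = iso_class (n-1) (card_del G v)" by (blast dest: in_diffD elim: deck_memE)
    thus "deg_count_class (n-1) X t \<le> deg_count n G t + deg_count n G (t + 1)"
      using deg_count_class_card_del[OF G] deg_count_card_del_le[OF G] by simp
  qed
  hence "real p \<le> real ((n - size C) * (deg_count n G t + deg_count n G (t + 1)))"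
    using size_rest by (simp only: of_nat_le_iff sum_mset_constant of_nat_id)
  hence "real p \<le> (real n - m) * (a + b)"
    unfolding a_def b_def m_def using mn by (simp only: of_nat_mult of_nat_add of_nat_diff)
  moreover have "real s - ((m - 1 - real t) * a + (real t + 1) * b) = (real n - m) * a - real p"
    using sp by (simp add: algebra_simps)
  moreover have "(real n - m) * a \<ge> 0" "(real n - m) * b \<ge> 0" "real p \<ge> 0"
    unfolding a_def b_def m_def using mn by auto
  ultimately show ?thesis unfolding distrib_left by (simp only: abs_le_iff) linarith
qed

lemma deg_count_le_partial_deck:
  assumes G: "is_graph n G" and sub: "image_mset (iso_class (n - 1)) C \<subseteq># deck n G"
    and F: "F \<in># C" "is_graph (n-1) F"
  shows "deg_count n G t \<le> 1 + deg_count (n-1) F t + deg_count (n-1) F (t - 1)"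
proof -
  have "iso_class (n-1) F \<in># deck n G" using F(1) mset_subset_eqD[OF sub] by simp
  then obtain v where v: "v < n" "iso_class (n-1) F = iso_class (n-1) (card_del G v)" by (rule deck_memE)
  have "deg_count (n-1) F s = deg_count (n-1) (card_del G v) s" for s
    using deg_count_class_iso_class[OF F(2), of s] deg_count_class_card_del[OF G v(1), of s] v(2) by metis
  thus ?thesis using deg_count_le_card_del[OF G v(1), of t] by simp
qed

section \<open>Bounds from a two-term recurrence\<close>

function recurrence_bound :: "(nat \<Rightarrow> real) \<Rightarrow> (nat \<Rightarrow> real) \<Rightarrow> real \<Rightarrow> nat \<Rightarrow> nat \<Rightarrow> real" where
  "recurrence_bound e q A T t = (if t < T then e t + q t * recurrence_bound e q A T (Suc t) else A)"
  by auto
termination by (relation "measure (\<lambda>(e,q,A,T,t). T - t)") auto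

declare recurrence_bound.simps[simp del]

lemma recurrence_bound_less: "t < T \<Longrightarrow> recurrence_bound e q A T t = e t + q t * recurrence_bound e q A T (Suc t)"
  by (subst recurrence_bound.simps) simp

lemma recurrence_bound_ge: "\<not> t < T \<Longrightarrow> recurrence_bound e q A T t = A"
  by (subst recurrence_bound.simps) simp

lemma recurrence_bound_nonneg:
  assumes "\<And>t. e t \<ge> 0" "\<And>t. q t \<ge> 0" "A \<ge> 0"
  shows "recurrence_bound e q A T t \<ge> 0"
proof (induction "T - t" arbitrary: t)
  case 0 thus ?case using recurrence_bound_ge[of t T] assms by simp
next
  case (Suc d)
  hence "t < T" "d = T - Suc t" by auto
  hence "recurrence_bound e q A T (Suc t) \<ge> 0" using Suc by simp
  thus ?case using recurrence_bound_less[OF \<open>t < T\<close>] assms by simp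
qed

lemma abs_le_recurrence_bound:
  fixes D :: "nat \<Rightarrow> real"
  assumes "\<And>t. e t \<ge> 0" "\<And>t. q t \<ge> 0"
    and rec: "\<And>t. t < T \<Longrightarrow> \<bar>D t\<bar> \<le> e t + q t * \<bar>D (Suc t)\<bar>" and top: "\<bar>D T\<bar> \<le> A"
  shows "t \<le> T \<Longrightarrow> \<bar>D t\<bar> \<le> recurrence_bound e q A T t"
proof (induction "T - t" arbitrary: t)
  case 0 thus ?case using recurrence_bound_ge[of t T] top by simp
next
  case (Suc d)
  hence tT: "t < T" and "d = T - Suc t" by auto
  hence ih: "\<bar>D (Suc t)\<bar> \<le> recurrence_bound e q A T (Suc t)" using Suc by simp
  have "\<bar>D t\<bar> \<le> e t + q t * \<bar>D (Suc t)\<bar>" by (rule rec[OF tT])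
  also have "\<dots> \<le> e t + q t * recurrence_bound e q A T (Suc t)" using ih assms(2)[of t] by (simp add: mult_left_mono)
  finally show ?case using recurrence_bound_less[OF tT] by simp
qed

lemma recurrence_bound_le_sum:
  assumes "\<And>t. e t \<ge> 0" "\<And>t. q t \<ge> 0" "A \<ge> 0" and q1: "\<And>t. t < T \<Longrightarrow> q t \<le> 1"
  shows "t \<le> T \<Longrightarrow> recurrence_bound e q A T t \<le> (\<Sum>s\<in>{t..<T}. e s) + A"
proof (induction "T - t" arbitrary: t)
  case 0 thus ?case using recurrence_bound_ge[of t T] by simp
next
  case (Suc d)
  let ?B = "recurrence_bound e q A T"
  from Suc.hyps have tT: "t < T" and "d = T - Suc t" by auto
  hence ih: "?B (Suc t) \<le> (\<Sum>s\<in>{Suc t..<T}. e s) + A" using Suc by simp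
  have nn: "?B (Suc t) \<ge> 0" by (rule recurrence_bound_nonneg[OF assms(1-3)])
  have "q t * ?B (Suc t) \<le> ?B (Suc t)"
    using q1[OF tT] nn by (simp add: mult_left_le_one_le assms(2))
  hence "?B t \<le> e t + ((\<Sum>s\<in>{Suc t..<T}. e s) + A)" using recurrence_bound_less[OF tT] ih by simp
  also have "\<dots> = (\<Sum>s\<in>{t..<T}. e s) + A" using tT by (simp add: sum.atLeast_Suc_lessThan)
  finally show ?case .
qed

lemma recurrence_bound_contracts:
  assumes "\<And>t. e t \<ge> 0" "\<And>t. q t \<ge> 0" "A \<ge> 0" and qq: "0 \<le> qq" "qq \<le> 1"
    and qP: "\<And>t. t < P \<Longrightarrow> q t \<le> qq" and PT: "P \<le> T"
  shows "t \<le> P \<Longrightarrow>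
    recurrence_bound e q A T t \<le> (\<Sum>s\<in>{t..<P}. e s) + qq ^ (P - t) * recurrence_bound e q A T P"
proof (induction "P - t" arbitrary: t)
  case 0 thus ?case by simp
next
  case (Suc d)
  let ?B = "recurrence_bound e q A T"
  from Suc.hyps have tP: "t < P" and "d = P - Suc t" by auto
  hence ih: "?B (Suc t) \<le> (\<Sum>s\<in>{Suc t..<P}. e s) + qq ^ (P - Suc t) * ?B P"
    using Suc by simp
  have tT: "t < T" using tP PT by simp
  have nn: "?B (Suc t) \<ge> 0" by (rule recurrence_bound_nonneg[OF assms(1-3)])
  have sn: "(\<Sum>s\<in>{Suc t..<P}. e s) \<ge> 0" using assms(1) by (simp add: sum_nonneg)
  have "q t * ?B (Suc t) \<le> qq * ?B (Suc t)"
    using qP[OF tP] nn by (simp add: mult_right_mono)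
  also have "\<dots> \<le> qq * ((\<Sum>s\<in>{Suc t..<P}. e s) + qq ^ (P - Suc t) * ?B P)"
    using ih qq by (simp add: mult_left_mono)
  also have "\<dots> = qq * (\<Sum>s\<in>{Suc t..<P}. e s) + qq ^ (P - t) * ?B P"
  proof -
    have "P - t = Suc (P - Suc t)" using tP by simp
    thus ?thesis by (simp add: algebra_simps)
  qed
  also have "\<dots> \<le> (\<Sum>s\<in>{Suc t..<P}. e s) + qq ^ (P - t) * ?B P"
    using qq sn by (simp add: mult_left_le_one_le)
  finally have "?B t \<le> e t + ((\<Sum>s\<in>{Suc t..<P}. e s) + qq ^ (P - t) * ?B P)"
    using recurrence_bound_less[OF tT] by simp
  also have "\<dots> = (\<Sum>s\<in>{t..<P}. e s) + qq ^ (P - t) * ?B P"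
    using tP by (simp add: sum.atLeast_Suc_lessThan)
  finally show ?case .
qed

lemma sum_recurrence_bound_le:
  assumes "\<And>t. e t \<ge> 0" "\<And>t. q t \<ge> 0" "A \<ge> 0" and qq: "qq < 1" and q0: "0 \<le> qq"
    and qL: "\<And>t. t < L \<Longrightarrow> q t \<le> qq" and LT: "L \<le> T"
  shows "(\<Sum>t<L. recurrence_bound e q A T t) \<le> ((\<Sum>t<L. e t) + recurrence_bound e q A T L) / (1 - qq)"
proof -
  let ?B = "recurrence_bound e q A T"
  have nn: "\<And>t. ?B t \<ge> 0" by (rule recurrence_bound_nonneg[OF assms(1-3)])
  have "(\<Sum>t<L. ?B t) \<le> (\<Sum>t<L. e t + qq * ?B (Suc t))"
  proof (rule sum_mono)
    fix t assume "t \<in> {..<L}"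
    hence tL: "t < L" and tT: "t < T" using LT by auto
    have "q t * ?B (Suc t) \<le> qq * ?B (Suc t)" using qL[OF tL] nn[of "Suc t"] by (simp add: mult_right_mono)
    thus "?B t \<le> e t + qq * ?B (Suc t)" using recurrence_bound_less[OF tT] by simp
  qed
  also have "\<dots> = (\<Sum>t<L. e t) + qq * (\<Sum>t<L. ?B (Suc t))"
    by (simp add: sum.distrib sum_distrib_left)
  also have "(\<Sum>t<L. ?B (Suc t)) = (\<Sum>t<L. ?B t) + ?B L - ?B 0"
  proof -
    have "(\<Sum>t<Suc L. ?B t) = ?B 0 + (\<Sum>t<L. ?B (Suc t))" by (rule sum.lessThan_Suc_shift)
    moreover have "(\<Sum>t<Suc L. ?B t) = (\<Sum>t<L. ?B t) + ?B L" by simp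
    ultimately show ?thesis by simp
  qed
  finally have shifted: "(\<Sum>t<L. ?B t) \<le> (\<Sum>t<L. e t) + qq * ((\<Sum>t<L. ?B t) + ?B L - ?B 0)" .
  have "(1 - qq) * (\<Sum>t<L. ?B t) \<le> (\<Sum>t<L. e t) + ?B L"
  proof -
    have "qq * ((\<Sum>t<L. ?B t) + ?B L - ?B 0) \<le> qq * (\<Sum>t<L. ?B t) + ?B L"
    proof -
      have "qq * ((\<Sum>t<L. ?B t) + ?B L - ?B 0) \<le> qq * ((\<Sum>t<L. ?B t) + ?B L)"
        using q0 nn[of 0] by (simp add: mult_left_mono)
      also have "\<dots> = qq * (\<Sum>t<L. ?B t) + qq * ?B L" by (simp add: algebra_simps)
      also have "qq * ?B L \<le> ?B L" using qq q0 nn[of L] by (simp add: mult_left_le_one_le)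
      finally show ?thesis by simp
    qed
    thus ?thesis using shifted by (simp add: algebra_simps)
  qed
  thus ?thesis using qq by (simp add: field_simps)
qed

lemma card_ge_one_le_sum:
  fixes f :: "nat \<Rightarrow> real"
  assumes "finite A" "\<And>t. f t \<ge> 0"
  shows "real (card {t\<in>A. f t \<ge> 1}) \<le> sum f A"
proof -
  have "real (card {t\<in>A. f t \<ge> 1}) = (\<Sum>t\<in>{t\<in>A. f t \<ge> 1}. 1)" by simp
  also have "\<dots> \<le> (\<Sum>t\<in>{t\<in>A. f t \<ge> 1}. f t)" by (rule sum_mono) auto
  also have "\<dots> \<le> sum f A" by (rule sum_mono2) (use assms in auto)
  finally show ?thesis .
qed

text \<open>Markov's inequality for the sum of the bounds below T - 5w, which is a geometric series
  with ratio qq; the bound at T - 5w has decayed by qq^(3w) from its value at T - 2w.\<close>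
lemma card_recurrence_bound_ge_one:
  assumes e0: "\<And>t. e t \<ge> 0" and q0: "\<And>t. q t \<ge> 0" and A0: "A \<ge> 0"
    and qq: "0 \<le> qq" "qq < 1"
    and q1: "\<And>t. t < T \<Longrightarrow> q t \<le> 1" and q2: "\<And>t. t + 2 * w < T \<Longrightarrow> q t \<le> qq"
  shows "real (card {t\<in>{..<T - 5*w}. recurrence_bound e q A T t \<ge> 1})
      \<le> (2 * (\<Sum>t<T. e t) + qq ^ (3*w) * ((\<Sum>t<T. e t) + A)) / (1 - qq)"
proof -
  let ?E = "\<Sum>t<T. e t"
  let ?B = "recurrence_bound e q A T"
  have E0: "?E \<ge> 0" using e0 by (simp add: sum_nonneg)
  have rhs0: "(2 * ?E + qq ^ (3*w) * (?E + A)) / (1 - qq) \<ge> 0"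
    using E0 A0 qq by (simp add: zero_le_power)
  show ?thesis
  proof (cases "5 * w \<le> T")
    case False
    hence "T - 5*w = 0" by simp
    thus ?thesis using rhs0 by simp
  next
    case True
    define L where "L = T - 5*w"
    define P where "P = T - 2*w"
    have LP: "L \<le> P" "P \<le> T" "P - L = 3*w" using True unfolding L_def P_def by auto
    have qL: "\<And>t. t < L \<Longrightarrow> q t \<le> qq" using q2 True unfolding L_def by auto
    have qP: "\<And>t. t < P \<Longrightarrow> q t \<le> qq" using q2 True unfolding P_def by auto
    have "real (card {t\<in>{..<L}. ?B t \<ge> 1}) \<le> (\<Sum>t<L. ?B t)"
      by (rule card_ge_one_le_sum) (auto intro: recurrence_bound_nonneg e0 q0 A0)
    also have "\<dots> \<le> ((\<Sum>t<L. e t) + ?B L) / (1 - qq)"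
      by (rule sum_recurrence_bound_le[OF e0 q0 A0 qq(2) qq(1) qL]) (use LP in auto)
    also have "\<dots> \<le> (2 * ?E + qq ^ (3*w) * (?E + A)) / (1 - qq)"
    proof (rule divide_right_mono)
      show "0 \<le> 1 - qq" using qq by simp
      have s1: "(\<Sum>t<L. e t) \<le> ?E" by (rule sum_mono2) (use e0 LP in auto)
      have s2: "(\<Sum>s\<in>{L..<P}. e s) \<le> ?E" by (rule sum_mono2) (use e0 LP in auto)
      have s3: "(\<Sum>s\<in>{P..<T}. e s) \<le> ?E" by (rule sum_mono2) (use e0 in auto)
      have bL: "?B L \<le> (\<Sum>s\<in>{L..<P}. e s) + qq ^ (P - L) * ?B P"
        by (rule recurrence_bound_contracts[OF e0 q0 A0 qq(1) _ qP LP(2) LP(1)]) (use qq in simp)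
      have bP: "?B P \<le> (\<Sum>s\<in>{P..<T}. e s) + A"
        by (rule recurrence_bound_le_sum[OF e0 q0 A0 q1 LP(2)])
      have pw: "qq ^ (3*w) \<ge> 0" using qq by simp
      have "qq ^ (P - L) * ?B P \<le> qq ^ (3*w) * (?E + A)"
        using LP(3) bP s3 pw by (simp add: mult_left_mono)
      thus "(\<Sum>t<L. e t) + ?B L \<le> 2 * ?E + qq ^ (3*w) * (?E + A)"
        using s1 s2 bL by linarith
    qed
    finally show ?thesis unfolding L_def .
  qed
qed

lemma abs_le_recurrence_bound_low:
  fixes D R :: "nat \<Rightarrow> real"
  assumes rec: "\<And>t. t < T0 \<Longrightarrow> \<bar>(real m - 1 - real t) * D t + (real t + 1) * D (Suc t)\<bar> \<le> R t"
    and T0: "2 * T0 + 1 \<le> m" and top: "\<bar>D T0\<bar> \<le> A" and R0: "\<And>t. R t \<ge> 0"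
  shows "t \<le> T0 \<Longrightarrow> \<bar>D t\<bar> \<le> recurrence_bound
        (\<lambda>t. if t < T0 then R t / (real m - 1 - real t) else 0)
        (\<lambda>t. if t < T0 then (real t + 1) / (real m - 1 - real t) else 0) A T0 t"
proof (rule abs_le_recurrence_bound)
  fix t
  show "0 \<le> (if t < T0 then R t / (real m - 1 - real t) else 0)"
    using R0[of t] T0 by (auto intro!: divide_nonneg_pos)
  show "0 \<le> (if t < T0 then (real t + 1) / (real m - 1 - real t) else 0)"
    using T0 by (auto intro!: divide_nonneg_pos)
next
  fix t assume tT: "t < T0"
  define a where "a = real m - 1 - real t"
  have a0: "a > 0" using tT T0 unfolding a_def by linarith
  have "a * \<bar>D t\<bar> = \<bar>a * D t\<bar>" using a0 by (simp add: abs_mult)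
  also have "\<dots> \<le> \<bar>a * D t + (real t + 1) * D (Suc t)\<bar> + \<bar>(real t + 1) * D (Suc t)\<bar>" by linarith
  also have "\<dots> \<le> R t + (real t + 1) * \<bar>D (Suc t)\<bar>" using rec[OF tT] unfolding a_def by (simp add: abs_mult)
  finally have "a * \<bar>D t\<bar> \<le> R t + (real t + 1) * \<bar>D (Suc t)\<bar>" .
  hence "\<bar>D t\<bar> \<le> R t / a + (real t + 1) / a * \<bar>D (Suc t)\<bar>" using a0 by (simp add: field_simps)
  thus "\<bar>D t\<bar> \<le> (if t < T0 then R t / (real m - 1 - real t) else 0) +
      (if t < T0 then (real t + 1) / (real m - 1 - real t) else 0) * \<bar>D (Suc t)\<bar>"
    using tT unfolding a_def by simp
qed (use top in auto)

lemma abs_le_recurrence_bound_high: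
  fixes D R :: "nat \<Rightarrow> real"
  assumes rec: "\<And>t. t + 1 < n \<Longrightarrow> \<bar>(real m - 1 - real t) * D t + (real t + 1) * D (Suc t)\<bar> \<le> R t"
    and mk: "m + k = n" and T1: "2 * T1 \<le> n" and n2: "n \<ge> 2"
    and top: "\<bar>D (n - 1 - T1)\<bar> \<le> A" and R0: "\<And>t. R t \<ge> 0"
  shows "j \<le> T1 \<Longrightarrow> \<bar>D (n - 1 - j)\<bar> \<le> recurrence_bound
        (\<lambda>j. if j < T1 then R (n - 2 - j) / (real n - 1 - real j) else 0)
        (\<lambda>j. if j < T1 then \<bar>real j + 1 - real k\<bar> / (real n - 1 - real j) else 0) A T1 j"
proof (rule abs_le_recurrence_bound[where D = "\<lambda>j. D (n - 1 - j)"])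
  fix j
  show "0 \<le> (if j < T1 then R (n - 2 - j) / (real n - 1 - real j) else 0)"
    using R0 T1 by (auto intro!: divide_nonneg_pos)
  show "0 \<le> (if j < T1 then \<bar>real j + 1 - real k\<bar> / (real n - 1 - real j) else 0)"
    using T1 by (auto intro!: divide_nonneg_pos)
next
  fix j assume jT: "j < T1"
  define t where "t = n - 2 - j"
  have t1: "t + 1 < n" "real t = real n - 2 - real j" using jT T1 n2 unfolding t_def by auto
  have eq1: "n - 1 - j = Suc t" and eq2: "n - 1 - Suc j = t" using jT T1 n2 unfolding t_def by auto
  define a where "a = real n - 1 - real j"
  have a0: "a > 0" using jT T1 unfolding a_def by linarith
  have at: "real t + 1 = a" using t1 unfolding a_def by simp
  have bt: "real m - 1 - real t = real j + 1 - real k" using t1 mk by linarith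
  have "a * \<bar>D (Suc t)\<bar> = \<bar>a * D (Suc t)\<bar>" using a0 by (simp add: abs_mult)
  also have "\<dots> \<le> \<bar>(real j + 1 - real k) * D t + a * D (Suc t)\<bar> + \<bar>(real j + 1 - real k) * D t\<bar>"
    by linarith
  also have "\<dots> \<le> R t + \<bar>real j + 1 - real k\<bar> * \<bar>D t\<bar>"
  proof -
    have "\<bar>(real j + 1 - real k) * D t + a * D (Suc t)\<bar> \<le> R t"
      using rec[OF t1(1)] unfolding bt at .
    thus ?thesis by (simp add: abs_mult)
  qed
  finally have "a * \<bar>D (Suc t)\<bar> \<le> R t + \<bar>real j + 1 - real k\<bar> * \<bar>D t\<bar>" .
  hence "\<bar>D (Suc t)\<bar> \<le> R t / a + \<bar>real j + 1 - real k\<bar> / a * \<bar>D t\<bar>"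
    using a0 by (simp add: field_simps)
  thus "\<bar>D (n - 1 - j)\<bar> \<le> (if j < T1 then R (n - 2 - j) / (real n - 1 - real j) else 0) +
      (if j < T1 then \<bar>real j + 1 - real k\<bar> / (real n - 1 - real j) else 0) * \<bar>D (n - 1 - Suc j)\<bar>"
    using jT unfolding a_def eq1 eq2 t_def by simp
qed (use top in auto)

lemma one_minus_power_le_inverse:
  fixes x :: real
  assumes "0 \<le> x" "x \<le> 1"
  shows "(1 - x) ^ k \<le> 1 / (1 + real k * x)"
proof -
  have bernoulli: "1 + real k * x \<le> (1 + x) ^ k" using Bernoulli_inequality[of x k] assms by simp
  have "(1 - x) ^ k * (1 + x) ^ k = (1 - x^2) ^ k"
    by (simp add: power_mult_distrib[symmetric] power2_eq_square algebra_simps)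
  also have "\<dots> \<le> 1" using assms by (intro power_le_one) (auto simp: power_le_one)
  finally have product_le_one: "(1 - x) ^ k * (1 + x) ^ k \<le> 1" .
  have pos: "1 + real k * x > 0" using assms by (simp add: add_pos_nonneg)
  have "(1 - x) ^ k * (1 + real k * x) \<le> (1 - x) ^ k * (1 + x) ^ k"
    using bernoulli assms by (intro mult_left_mono) auto
  hence "(1 - x) ^ k * (1 + real k * x) \<le> 1" using product_le_one by linarith
  thus ?thesis using pos by (simp add: field_simps)
qed

lemma one_minus_ratio_power_le:
  fixes n w :: nat
  assumes "1 \<le> w" "w \<le> n"
  shows "(1 - real w / real n) ^ (3 * w) \<le> real n ^ 3 / real w ^ 6"
proof -
  have x: "0 \<le> real w / real n" "real w / real n \<le> 1" using assms by auto
  have "(1 - real w / real n) ^ w \<le> 1 / (1 + real w * (real w / real n))"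
    by (rule one_minus_power_le_inverse[OF x])
  also have "\<dots> \<le> real n / real w ^ 2"
  proof -
    have "real w * (real w / real n) = real w ^ 2 / real n" by (simp add: power2_eq_square)
    moreover have "1 / (1 + real w ^ 2 / real n) \<le> 1 / (real w ^ 2 / real n)"
      using assms by (intro divide_left_mono) (auto simp: add_pos_nonneg)
    ultimately show ?thesis using assms by simp
  qed
  finally have w_power: "(1 - real w / real n) ^ w \<le> real n / real w ^ 2" .
  have "(1 - real w / real n) ^ (3 * w) = ((1 - real w / real n) ^ w) ^ 3"
    by (simp add: power_mult[symmetric] mult.commute)
  also have "\<dots> \<le> (real n / real w ^ 2) ^ 3" by (rule power_mono[OF w_power]) (use x in simp)
  also have "\<dots> = real n ^ 3 / real w ^ 6" by (simp add: power_divide power_mult[symmetric])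
  finally show ?thesis .
qed

lemma card_recurrence_bound_ge_one_le:
  fixes n w :: nat and E :: real
  assumes e0: "\<And>t. e t \<ge> 0" and q0: "\<And>t. q t \<ge> 0"
    and q1: "\<And>t. t < T \<Longrightarrow> q t \<le> 1" and q2: "\<And>t. t + 2 * w < T \<Longrightarrow> q t \<le> 1 - real w / real n"
    and E: "(\<Sum>t<T. e t) \<le> E" "E \<le> 20 * real n"
    and w: "1 \<le> w" "w \<le> n" "21 * real n ^ 4 \<le> real w ^ 6"
  shows "real (card {t\<in>{..<T - 5*w}. recurrence_bound e q (real n) T t \<ge> 1})
      \<le> (real n / real w) * (2 * E + 1)"
proof -
  let ?S = "\<Sum>t<T. e t" and ?P = "(1 - real w / real n) ^ (3*w)"
  have S0: "?S \<ge> 0" using e0 by (simp add: sum_nonneg)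
  have P: "0 \<le> ?P" "?P \<le> real n ^ 3 / real w ^ 6"
    using one_minus_ratio_power_le[OF w(1,2)] w by auto
  have "?P * (?S + real n) \<le> (real n ^ 3 / real w ^ 6) * (21 * real n)"
    using P S0 E by (intro mult_mono) auto
  also have "\<dots> = 21 * real n ^ 4 / real w ^ 6" by (simp add: power_numeral_reduce field_simps)
  also have "\<dots> \<le> 1" using w by (simp add: divide_le_eq)
  finally have num: "2 * ?S + ?P * (?S + real n) \<le> 2 * E + 1" using E by linarith
  have "real (card {t\<in>{..<T - 5*w}. recurrence_bound e q (real n) T t \<ge> 1})
      \<le> (2 * ?S + ?P * (?S + real n)) / (1 - (1 - real w / real n))"
    by (rule card_recurrence_bound_ge_one[OF e0 q0 _ _ _ q1 q2]) (use w in auto)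
  also have "\<dots> = (2 * ?S + ?P * (?S + real n)) * (real n / real w)" by simp
  also have "\<dots> \<le> (2 * E + 1) * (real n / real w)" by (rule mult_right_mono[OF num]) simp
  finally show ?thesis by (simp only: mult.commute)
qed

section \<open>Exceptional degrees\<close>

lemma divide_le_one_minus_ratio:
  fixes a b n w :: real
  assumes "a > 0" "b \<ge> 0" "a \<le> n" "b + w \<le> a" "n > 0" "w \<ge> 0"
  shows "b / a \<le> 1 - w / n"
proof -
  have "a * w / n \<le> w" using assms by (simp add: divide_le_eq mult.commute mult_right_mono)
  hence "b \<le> a * (1 - w / n)" using assms by (simp add: algebra_simps)
  thus ?thesis using assms by (simp add: divide_le_eq mult.commute)
qed

text \<open>Below t = (n - k - 1)/2 the recurrence |(n - k - 1 - t) D_t + (t + 1) D_(t+1)| <= R_t bounds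
  D_t through D_(t+1); above it, D_(t+1) through D_t. The two bounds unroll it from the middle, where
  only |D| <= n is known, down to t = 0 and, in the reversed index j = n - 1 - t, up to t = n - 1.\<close>
definition lower_half_bound :: "nat \<Rightarrow> nat \<Rightarrow> (nat \<Rightarrow> real) \<Rightarrow> nat \<Rightarrow> real" where
  "lower_half_bound n k R = recurrence_bound
     (\<lambda>t. if t < (n - k - 1) div 2 then R t / (real (n - k) - 1 - real t) else 0)
     (\<lambda>t. if t < (n - k - 1) div 2 then (real t + 1) / (real (n - k) - 1 - real t) else 0)
     (real n) ((n - k - 1) div 2)"

definition upper_half_bound :: "nat \<Rightarrow> nat \<Rightarrow> (nat \<Rightarrow> real) \<Rightarrow> nat \<Rightarrow> real" where
  "upper_half_bound n k R = recurrence_bound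
     (\<lambda>j. if j < n div 2 then R (n - 2 - j) / (real n - 1 - real j) else 0)
     (\<lambda>j. if j < n div 2 then \<bar>real j + 1 - real k\<bar> / (real n - 1 - real j) else 0)
     (real n) (n div 2)"

text \<open>The middle window, of width about 10w + k, is given up: the unrolled bounds contract only at
  distance 2w from the middle, and need another 3w steps to absorb the initial bound n.\<close>
definition exceptional_degrees :: "nat \<Rightarrow> nat \<Rightarrow> nat \<Rightarrow> (nat \<Rightarrow> real) \<Rightarrow> nat set" where
  "exceptional_degrees n k w R =
     {(n - k - 1) div 2 - 5 * w ..< n - (n div 2 - 5 * w)}
   \<union> {t\<in>{..<(n - k - 1) div 2 - 5 * w}. lower_half_bound n k R t \<ge> 1}
   \<union> (\<lambda>j. n - 1 - j) ` {j\<in>{..<n div 2 - 5 * w}. upper_half_bound n k R j \<ge> 1}"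

lemma abs_lt_one_outside_exceptional_degrees:
  fixes D R :: "nat \<Rightarrow> real"
  assumes rec: "\<And>t. t + 1 < n \<Longrightarrow> \<bar>(real (n - k) - 1 - real t) * D t + (real t + 1) * D (Suc t)\<bar> \<le> R t"
    and D: "\<And>t. \<bar>D t\<bar> \<le> real n" and R0: "\<And>t. R t \<ge> 0"
    and nk: "4 * k \<le> n" "4 \<le> n"
    and t: "t < n" "t \<notin> exceptional_degrees n k w R"
  shows "\<bar>D t\<bar> < 1"
proof (cases "t < (n - k - 1) div 2 - 5 * w")
  case True
  define T0 where "T0 = (n - k - 1) div 2"
  have T0: "2 * T0 + 1 \<le> n - k" using nk unfolding T0_def by auto
  have "\<bar>D t\<bar> \<le> lower_half_bound n k R t"
    unfolding lower_half_bound_def T0_def[symmetric]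
  proof (rule abs_le_recurrence_bound_low[OF _ T0 D R0])
    show "\<And>s. s < T0 \<Longrightarrow> \<bar>(real (n - k) - 1 - real s) * D s + (real s + 1) * D (Suc s)\<bar> \<le> R s"
      using rec T0 by simp
    show "t \<le> T0" using True unfolding T0_def by simp
  qed
  moreover have "\<not> lower_half_bound n k R t \<ge> 1"
    using t True unfolding exceptional_degrees_def by auto
  ultimately show ?thesis by simp
next
  case False
  define j where "j = n - 1 - t"
  have j: "j < n div 2 - 5 * w" "n - 1 - j = t"
    using t False unfolding j_def exceptional_degrees_def by auto
  have "\<bar>D (n - 1 - j)\<bar> \<le> upper_half_bound n k R j"
    unfolding upper_half_bound_def
  proof (rule abs_le_recurrence_bound_high[OF _ _ _ _ D R0])
    show "\<And>s. s + 1 < n \<Longrightarrow> \<bar>(real (n - k) - 1 - real s) * D s + (real s + 1) * D (Suc s)\<bar> \<le> R s"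
      by (rule rec)
  qed (use nk j in auto)
  moreover have "\<not> upper_half_bound n k R j \<ge> 1"
  proof
    assume "upper_half_bound n k R j \<ge> 1"
    hence "t \<in> exceptional_degrees n k w R"
      unfolding exceptional_degrees_def using j by (intro UnI2 image_eqI[of _ _ j]) auto
    thus False using t by simp
  qed
  ultimately show ?thesis using j by simp
qed

lemma card_lower_half_bound_ge_one_le:
  fixes R :: "nat \<Rightarrow> real"
  assumes R0: "\<And>t. R t \<ge> 0" and sR: "(\<Sum>t<n. R t) \<le> 20 * real k * real n"
    and nk: "4 * k \<le> n" "4 \<le> n" and w: "1 \<le> w" "8 * w \<le> n" "21 * real n ^ 4 \<le> real w ^ 6"
  shows "real (card {t\<in>{..<(n - k - 1) div 2 - 5 * w}. lower_half_bound n k R t \<ge> 1})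
      \<le> (real n / real w) * (160 * real k + 1)"
proof -
  define m where "m = n - k"
  define T0 where "T0 = (m - 1) div 2"
  have T0: "2 * T0 + 1 \<le> m" "m \<le> 2 * T0 + 2" and mr: "real m = real n - real k"
    using nk unfolding T0_def m_def by auto
  have e0: "R t / (real m - 1 - real t) \<ge> 0" if "t < T0" for t
    using R0[of t] that T0 by (auto intro!: divide_nonneg_pos)
  have q0: "(real t + 1) / (real m - 1 - real t) \<ge> 0" if "t < T0" for t
    using that T0 by (auto intro!: divide_nonneg_pos)
  have q1: "(real t + 1) / (real m - 1 - real t) \<le> 1" if "t < T0" for t
    using that T0 by (simp add: divide_le_eq)
  have q2: "(real t + 1) / (real m - 1 - real t) \<le> 1 - real w / real n" if "t + 2 * w < T0" for t
    by (rule divide_le_one_minus_ratio) (use that T0 mr nk w in linarith)+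
  have "(\<Sum>t<T0. R t / (real m - 1 - real t)) \<le> (\<Sum>t<T0. 4 / real n * R t)"
  proof (rule sum_mono)
    fix t assume "t \<in> {..<T0}"
    hence d: "real m - 1 - real t \<ge> real n / 4" using T0 mr nk by auto
    have "R t / (real m - 1 - real t) \<le> R t / (real n / 4)"
      by (rule divide_left_mono[OF d R0]) (use nk d in auto)
    thus "R t / (real m - 1 - real t) \<le> 4 / real n * R t" by (simp add: mult.commute)
  qed
  also have "\<dots> \<le> 4 / real n * (\<Sum>t<n. R t)"
    unfolding sum_distrib_left[symmetric] using R0 T0 m_def by (intro mult_left_mono sum_mono2) auto
  also have "\<dots> \<le> 4 / real n * (20 * real k * real n)" using sR by (intro mult_left_mono) auto
  also have "\<dots> = 80 * real k" using nk by simp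
  finally have E: "(\<Sum>t<T0. R t / (real m - 1 - real t)) \<le> 80 * real k" .
  have "real (card {t\<in>{..<T0 - 5 * w}. lower_half_bound n k R t \<ge> 1})
      \<le> (real n / real w) * (2 * (80 * real k) + 1)"
    unfolding lower_half_bound_def T0_def[symmetric] m_def[symmetric]
    by (rule card_recurrence_bound_ge_one_le) (use e0 q0 q1 q2 E nk w in auto)
  thus ?thesis unfolding T0_def m_def by simp
qed

lemma card_upper_half_bound_ge_one_le:
  fixes R :: "nat \<Rightarrow> real"
  assumes R0: "\<And>t. R t \<ge> 0" and sR: "(\<Sum>t<n. R t) \<le> 20 * real k * real n"
    and nk: "4 * k \<le> n" "4 \<le> n" and w: "1 \<le> w" "8 * w \<le> n" "21 * real n ^ 4 \<le> real w ^ 6"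
  shows "real (card {j\<in>{..<n div 2 - 5 * w}. upper_half_bound n k R j \<ge> 1})
      \<le> (real n / real w) * (160 * real k + 1)"
proof -
  define T1 where "T1 = n div 2"
  have T1: "2 * T1 \<le> n" "n \<le> 2 * T1 + 1" unfolding T1_def by auto
  have e0: "R (n - 2 - j) / (real n - 1 - real j) \<ge> 0" if "j < T1" for j
    using R0 that T1 by (auto intro!: divide_nonneg_pos)
  have q0: "\<bar>real j + 1 - real k\<bar> / (real n - 1 - real j) \<ge> 0" if "j < T1" for j
    using that T1 by (auto intro!: divide_nonneg_pos)
  have q1: "\<bar>real j + 1 - real k\<bar> / (real n - 1 - real j) \<le> 1" if "j < T1" for j
    using that T1 nk by (simp add: divide_le_eq)
  have q2: "\<bar>real j + 1 - real k\<bar> / (real n - 1 - real j) \<le> 1 - real w / real n" if "j + 2 * w < T1" for j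
    by (rule divide_le_one_minus_ratio) (use that T1 nk w in linarith)+
  have "(\<Sum>j<T1. R (n - 2 - j) / (real n - 1 - real j)) \<le> (\<Sum>j<T1. 4 / real n * R (n - 2 - j))"
  proof (rule sum_mono)
    fix j assume "j \<in> {..<T1}"
    hence d: "real n - 1 - real j \<ge> real n / 4" using T1 nk by auto
    have "R (n - 2 - j) / (real n - 1 - real j) \<le> R (n - 2 - j) / (real n / 4)"
      by (rule divide_left_mono[OF d R0]) (use nk d in auto)
    thus "R (n - 2 - j) / (real n - 1 - real j) \<le> 4 / real n * R (n - 2 - j)" by (simp add: mult.commute)
  qed
  also have "\<dots> = 4 / real n * sum R ((\<lambda>j. n - 2 - j) ` {..<T1})"
  proof -
    have "inj_on (\<lambda>j. n - 2 - j) {..<T1}" unfolding inj_on_def using T1 nk by auto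
    thus ?thesis by (simp add: sum.reindex sum_distrib_left)
  qed
  also have "\<dots> \<le> 4 / real n * (\<Sum>t<n. R t)"
    using R0 nk by (intro mult_left_mono sum_mono2) auto
  also have "\<dots> \<le> 4 / real n * (20 * real k * real n)" using sR by (intro mult_left_mono) auto
  also have "\<dots> = 80 * real k" using nk by simp
  finally have E: "(\<Sum>j<T1. R (n - 2 - j) / (real n - 1 - real j)) \<le> 80 * real k" .
  have "real (card {j\<in>{..<T1 - 5 * w}. upper_half_bound n k R j \<ge> 1})
      \<le> (real n / real w) * (2 * (80 * real k) + 1)"
    unfolding upper_half_bound_def T1_def[symmetric]
    by (rule card_recurrence_bound_ge_one_le) (use e0 q0 q1 q2 E nk w in auto)
  thus ?thesis unfolding T1_def by simp
qed

lemma card_exceptional_degrees_le: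
  fixes R :: "nat \<Rightarrow> real"
  assumes "\<And>t. R t \<ge> 0" and "(\<Sum>t<n. R t) \<le> 20 * real k * real n"
    and nk: "4 * k \<le> n" "4 \<le> n" and w: "1 \<le> w" "8 * w \<le> n" "21 * real n ^ 4 \<le> real w ^ 6"
  shows "real (card (exceptional_degrees n k w R))
      \<le> 10 * real w + real k + 2 + 2 * ((real n / real w) * (160 * real k + 1))"
proof -
  let ?M = "{(n - k - 1) div 2 - 5 * w ..< n - (n div 2 - 5 * w)}"
    and ?L = "{t\<in>{..<(n - k - 1) div 2 - 5 * w}. lower_half_bound n k R t \<ge> 1}"
    and ?U = "{j\<in>{..<n div 2 - 5 * w}. upper_half_bound n k R j \<ge> 1}"
  have "card ?M \<le> 10 * w + k + 2" using nk by simp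
  moreover have "card ((\<lambda>j. n - 1 - j) ` ?U) \<le> card ?U" by (rule card_image_le) simp
  moreover have "card (exceptional_degrees n k w R) \<le> card (?M \<union> ?L) + card ((\<lambda>j. n - 1 - j) ` ?U)"
    unfolding exceptional_degrees_def by (rule card_Un_le)
  moreover have "card (?M \<union> ?L) \<le> card ?M + card ?L" by (rule card_Un_le)
  ultimately have "real (card (exceptional_degrees n k w R)) \<le> 10 * real w + real k + 2 + real (card ?L) + real (card ?U)"
    by linarith
  thus ?thesis
    using card_lower_half_bound_ge_one_le[OF assms] card_upper_half_bound_ge_one_le[OF assms] by linarith
qed

section \<open>Degree counts determined by a partial deck\<close>

lemma partial_deck_deg_count_difference:
  assumes G: "is_graph n G" and H: "is_graph n H"
    and sG: "image_mset (iso_class (n - 1)) C \<subseteq># deck n G"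
    and sH: "image_mset (iso_class (n - 1)) C \<subseteq># deck n H" and t: "t < n"
    and hG: "\<And>t. real (deg_count n G t) \<le> h t" and hH: "\<And>t. real (deg_count n H t) \<le> h t"
  shows "\<bar>(real (size C) - 1 - real t) * (real (deg_count n G t) - real (deg_count n H t))
          + (real t + 1) * (real (deg_count n G (Suc t)) - real (deg_count n H (Suc t)))\<bar>
         \<le> 2 * (real n - real (size C)) * (h t + h (Suc t))"
proof -
  let ?s = "real (\<Sum>X\<in>#image_mset (iso_class (n - 1)) C. deg_count_class (n-1) X t)"
  let ?m = "real (size C)"
  have "size C \<le> n" using size_mset_mono[OF sG] unfolding deck_def by simp
  hence k0: "real n - ?m \<ge> 0" by simp
  have estG: "\<bar>?s - ((?m - 1 - real t) * real (deg_count n G t) + (real t + 1) * real (deg_count n G (Suc t)))\<bar>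
         \<le> (real n - ?m) * (h t + h (Suc t))"
    using partial_deck_deg_count_estimate[OF G sG t] hG[of t] hG[of "Suc t"]
      mult_left_mono[OF _ k0, of "real (deg_count n G t) + real (deg_count n G (Suc t))" "h t + h (Suc t)"]
    by simp
  have estH: "\<bar>?s - ((?m - 1 - real t) * real (deg_count n H t) + (real t + 1) * real (deg_count n H (Suc t)))\<bar>
         \<le> (real n - ?m) * (h t + h (Suc t))"
    using partial_deck_deg_count_estimate[OF H sH t] hH[of t] hH[of "Suc t"]
      mult_left_mono[OF _ k0, of "real (deg_count n H t) + real (deg_count n H (Suc t))" "h t + h (Suc t)"]
    by simp
  show ?thesis using estG estH by (simp add: abs_le_iff algebra_simps)
qed

definition deg_envelope :: "nat \<Rightarrow> nat set set \<Rightarrow> nat \<Rightarrow> real" where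
  "deg_envelope p F t = 1 + real (deg_count p F t) + real (deg_count p F (t - 1))"

lemma sum_deg_count_le: "(\<Sum>t<M. deg_count p F t) \<le> p"
proof -
  have "(\<Sum>t<M. deg_count p F t) = card {x\<in>{0..<p}. degree F x < M}"
  proof (induction M)
    case (Suc M)
    have "{x\<in>{0..<p}. degree F x < Suc M} = {x\<in>{0..<p}. degree F x < M} \<union> {x\<in>{0..<p}. degree F x = M}"
      by auto
    hence "card {x\<in>{0..<p}. degree F x < Suc M} = card {x\<in>{0..<p}. degree F x < M} + deg_count p F M"
      unfolding deg_count_def by (subst card_Un_disjoint[symmetric]) auto
    thus ?case using Suc by simp
  qed simp
  also have "\<dots> \<le> card {0..<p}" by (rule card_mono) auto
  finally show ?thesis by simp
qed

lemma sum_deg_envelope_le: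
  assumes "p \<le> n"
  shows "(\<Sum>t<n. deg_envelope p F t + deg_envelope p F (Suc t)) \<le> 10 * real n"
proof -
  define c where "c t = real (deg_count p F t)" for t
  have sum_c: "(\<Sum>t<M. c t) \<le> real n" for M
    using sum_deg_count_le[of p F M] assms unfolding c_def by (simp flip: of_nat_sum)
  have "(\<Sum>t<Suc n. c (t - 1)) = c 0 + (\<Sum>t<n. c t)"
    by (subst sum.lessThan_Suc_shift) simp
  also have "\<dots> \<le> 2 * real n" using sum_c[of 1] sum_c[of n] by simp
  finally have "(\<Sum>t<Suc n. deg_envelope p F t) \<le> real (Suc n) + real n + 2 * real n"
    using sum_c[of "Suc n"] unfolding deg_envelope_def c_def[symmetric] by (simp add: sum.distrib)
  moreover have env0: "deg_envelope p F t \<ge> 0" for t unfolding deg_envelope_def by simp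
  hence "(\<Sum>t<n. deg_envelope p F t) \<le> (\<Sum>t<Suc n. deg_envelope p F t)" by simp
  moreover have "(\<Sum>t<n. deg_envelope p F (Suc t)) \<le> (\<Sum>t<Suc n. deg_envelope p F t)"
    using env0[of 0] sum.lessThan_Suc_shift[of "deg_envelope p F" n] by linarith
  moreover have "n \<ge> 1 \<or> n = 0" by auto
  ultimately show ?thesis by (auto simp: sum.distrib)
qed

lemma deg_count_le: "deg_count n G t \<le> n"
proof -
  have "deg_count n G t \<le> card {0..<n}" unfolding deg_count_def by (rule card_mono) auto
  thus ?thesis by simp
qed

lemma deg_count_eq_outside_exceptional_degrees:
  fixes C :: "nat set set multiset" and n k :: nat
  defines "R \<equiv> \<lambda>F t. 2 * real k * (deg_envelope (n - 1) F t + deg_envelope (n - 1) F (Suc t))"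
  assumes sz: "size C = n - k" and F: "F \<in># C" "is_graph (n - 1) F"
    and nk: "4 * k \<le> n" "4 \<le> n"
    and G: "is_graph n G" "image_mset (iso_class (n - 1)) C \<subseteq># deck n G"
    and H: "is_graph n H" "image_mset (iso_class (n - 1)) C \<subseteq># deck n H"
    and t: "t < n" "t \<notin> exceptional_degrees n k w (R F)"
  shows "deg_count n G t = deg_count n H t"
proof -
  define D where "D s = real (deg_count n G s) - real (deg_count n H s)" for s
  have env: "real (deg_count n X s) \<le> deg_envelope (n - 1) F s"
    if "is_graph n X" "image_mset (iso_class (n - 1)) C \<subseteq># deck n X" for X s
  proof -
    have "real (deg_count n X s) \<le> real (1 + deg_count (n - 1) F s + deg_count (n - 1) F (s - 1))"
      using deg_count_le_partial_deck[OF that F, of s] by (simp only: of_nat_le_iff)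
    thus ?thesis unfolding deg_envelope_def by simp
  qed
  have "\<bar>D t\<bar> < 1"
  proof (rule abs_lt_one_outside_exceptional_degrees[OF _ _ _ nk t])
    fix s assume "s + 1 < n"
    moreover have "real (size C) = real n - real k" using sz nk by (simp add: of_nat_diff)
    ultimately show "\<bar>(real (n - k) - 1 - real s) * D s + (real s + 1) * D (Suc s)\<bar> \<le> R F s"
      using partial_deck_deg_count_difference[OF G(1) H(1) G(2) H(2) _ env[OF G] env[OF H], of s]
      unfolding D_def R_def using nk by (simp add: of_nat_diff)
  next
    fix s show "\<bar>D s\<bar> \<le> real n"
      using deg_count_le[of n G s] deg_count_le[of n H s] unfolding D_def by linarith
  next
    fix s show "R F s \<ge> 0" unfolding R_def deg_envelope_def by simp
  qed
  thus ?thesis unfolding D_def by linarith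
qed

lemma partial_deck_determines_most_deg_counts:
  fixes C :: "nat set set multiset" and n k w :: nat
  assumes sz: "size C = n - k" and gr: "\<forall>F\<in>#C. is_graph (n - 1) F"
    and nk: "4 * k \<le> n" "4 \<le> n" and w: "1 \<le> w" "8 * w \<le> n" "21 * real n ^ 4 \<le> real w ^ 6"
  shows "\<exists>J \<subseteq> {0..<n}.
           real (card J) \<ge> real n - (10 * real w + real k + 2 + 2 * ((real n / real w) * (160 * real k + 1))) \<and>
          (\<forall>G H. is_graph n G \<and> is_graph n H \<and>
                 image_mset (iso_class (n - 1)) C \<subseteq># deck n G \<and>
                 image_mset (iso_class (n - 1)) C \<subseteq># deck n H \<longrightarrow>
                 (\<forall>t\<in>J. deg_count n G t = deg_count n H t))"
proof -
  have "C \<noteq> {#}" using sz nk by auto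
  then obtain F where F: "F \<in># C" by blast
  define R where "R t = 2 * real k * (deg_envelope (n - 1) F t + deg_envelope (n - 1) F (Suc t))" for t
  define J where "J = {0..<n} - exceptional_degrees n k w R"
  have R0: "R t \<ge> 0" for t unfolding R_def deg_envelope_def by simp
  have "(\<Sum>t<n. R t) = 2 * real k * (\<Sum>t<n. deg_envelope (n - 1) F t + deg_envelope (n - 1) F (Suc t))"
    unfolding R_def by (simp add: sum_distrib_left)
  also have "\<dots> \<le> 2 * real k * (10 * real n)"
    using sum_deg_envelope_le[of "n - 1" n F] by (intro mult_left_mono) auto
  finally have sR: "(\<Sum>t<n. R t) \<le> 20 * real k * real n" by simp
  have "finite (exceptional_degrees n k w R)" unfolding exceptional_degrees_def by simp
  hence "card {0..<n} - card (exceptional_degrees n k w R) \<le> card J"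
    unfolding J_def by (rule diff_card_le_card_Diff)
  hence "real (card J) \<ge> real n - real (card (exceptional_degrees n k w R))" by simp
  moreover note card_exceptional_degrees_le[OF R0 sR nk w]
  moreover have "deg_count n G t = deg_count n H t"
    if "is_graph n G" "image_mset (iso_class (n - 1)) C \<subseteq># deck n G"
       "is_graph n H" "image_mset (iso_class (n - 1)) C \<subseteq># deck n H" "t \<in> J" for G H t
    using deg_count_eq_outside_exceptional_degrees[OF sz F _ nk that(1-4)] gr F that(5)
    unfolding J_def R_def by auto
  ultimately show ?thesis unfolding J_def by (intro exI[of _ J]) (auto simp: J_def)
qed

section \<open>Choice of the window width\<close>

lemma large_order_bounds:
  fixes n k :: nat and \<beta> g C :: real
  assumes g: "3/4 \<le> g" "g < 1" "1 - g + \<beta> \<le> g" and C: "C > 0"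
    and hk: "real k \<le> C * real n powr \<beta>" and big: "real n powr (1 - g) \<ge> 100 + 4 * C"
  shows "100 \<le> n" "4 * k \<le> n"
proof -
  have n1: "real n \<ge> 1"
    using big C by (cases "n = 0") auto
  have "real n powr (1 - g) \<le> real n powr 1" using n1 g by (intro powr_mono) auto
  thus "100 \<le> n" using big C n1 by simp
  have "real n powr (1 - \<beta>) \<ge> real n powr (1 - g)" using n1 g by (intro powr_mono) auto
  hence "real n powr (1 - \<beta>) \<ge> 4 * C" using big C by simp
  hence "real n powr (1 - \<beta>) * real n powr \<beta> \<ge> 4 * C * real n powr \<beta>"
    by (intro mult_right_mono) auto
  moreover have "real n powr (1 - \<beta>) * real n powr \<beta> = real n" using n1 by (simp add: powr_add[symmetric])
  ultimately show "4 * k \<le> n" using hk by linarith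
qed

lemma ceiling_powr_window_width:
  fixes n :: nat and g :: real
  assumes g: "3/4 \<le> g" "g < 1" and big: "real n powr (1 - g) \<ge> 100"
  defines "w \<equiv> nat \<lceil>real n powr g\<rceil>"
  shows "1 \<le> w" "8 * w \<le> n" "21 * real n ^ 4 \<le> real w ^ 6"
proof -
  define x where "x = real n"
  have x1: "x \<ge> 1" using big unfolding x_def by (cases "n = 0") auto
  have xg1: "x powr g \<ge> 1" using x1 g by (intro ge_one_powr_ge_zero) auto
  have w: "real w \<ge> x powr g" "real w \<le> x powr g + 1"
    unfolding w_def x_def using xg1 unfolding x_def by (auto simp: of_nat_nat)
  thus "1 \<le> w" using xg1 by linarith
  have "x = x powr (1 - g) * x powr g" using x1 by (simp add: powr_add[symmetric])
  also have "\<dots> \<ge> 100 * x powr g" using big xg1 unfolding x_def by (intro mult_right_mono) auto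
  finally have "8 * real w \<le> x" using w xg1 by linarith
  thus "8 * w \<le> n" unfolding x_def by linarith
  have "x powr (3/4) \<le> real w" using w x1 g by (meson order_trans powr_mono)
  hence "(x powr (3/4)) ^ 6 \<le> real w ^ 6" by (intro power_mono) auto
  moreover have "(x powr (3/4)) ^ 6 = x ^ 4 * x powr (1/2)"
  proof -
    have "(x powr (3/4)) ^ 6 = x powr (real 6 * (3/4))" using x1 by (intro powr_power) auto
    also have "\<dots> = x powr (real 4) * x powr (1/2)" by (simp flip: powr_add)
    also have "\<dots> = x ^ 4 * x powr (1/2)" using x1 by (subst powr_realpow) auto
    finally show ?thesis .
  qed
  moreover have "x powr (1/2) \<ge> 21"
  proof -
    have "x powr (1 - g) \<le> x powr (1/2)" using x1 g by (intro powr_mono) auto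
    thus ?thesis using big unfolding x_def by simp
  qed
  hence "x ^ 4 * 21 \<le> x ^ 4 * x powr (1/2)" using x1 by (intro mult_left_mono) auto
  ultimately show "21 * real n ^ 4 \<le> real w ^ 6" unfolding x_def by simp
qed

lemma window_error_le_powr:
  fixes n k w :: nat and \<beta> g C :: real
  assumes g: "3/4 \<le> g" "g < 1" "1 - g + \<beta> \<le> g" and C: "C > 0" and n1: "1 \<le> n"
    and hk: "real k \<le> C * real n powr \<beta>"
    and w: "real n powr g \<le> real w" "real w \<le> real n powr g + 1"
  shows "10 * real w + real k + 2 + 2 * ((real n / real w) * (160 * real k + 1))
       \<le> (24 + 321 * C) * real n powr g"
proof -
  define x where "x = real n"
  have x1: "x \<ge> 1" unfolding x_def using n1 by simp
  have xg1: "x powr g \<ge> 1" using x1 g by (intro ge_one_powr_ge_zero) auto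
  have powr_le: "x powr a \<le> x powr g" if "a \<le> g" for a using x1 that by (intro powr_mono) auto
  have k: "real k \<le> C * x powr g"
    using hk mult_left_mono[OF powr_le[of \<beta>], of C] g C unfolding x_def by linarith
  have "real n / real w \<le> x / x powr g"
    unfolding x_def using w xg1 n1 unfolding x_def by (intro divide_left_mono) auto
  also have "\<dots> = x powr (1 - g)" using x1 by (simp add: powr_diff)
  finally have "(real n / real w) * (160 * real k + 1) \<le> x powr (1 - g) * (160 * (C * x powr \<beta>) + 1)"
    using hk unfolding x_def by (intro mult_mono) auto
  also have "\<dots> = 160 * C * x powr (1 - g + \<beta>) + x powr (1 - g)"
    unfolding powr_add[of x "1 - g" \<beta>] by (simp add: algebra_simps)
  also have "\<dots> \<le> 160 * C * x powr g + x powr g"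
    using powr_le[of "1 - g + \<beta>"] powr_le[of "1 - g"] g C by (intro add_mono mult_left_mono) auto
  finally have "(real n / real w) * (160 * real k + 1) \<le> 160 * (C * x powr g) + x powr g" by simp
  hence "10 * real w + real k + 2 + 2 * ((real n / real w) * (160 * real k + 1))
      \<le> 24 * x powr g + 321 * (C * x powr g)"
    using w k xg1 unfolding x_def by linarith
  thus ?thesis unfolding x_def by (simp add: algebra_simps)
qed

text \<open>For small n the bound is trivial with J = {}, which is why no threshold N is needed.\<close>
lemma partial_deck_determines_deg_counts:
  fixes \<beta> C :: real and n k :: nat and CC :: "nat set set multiset"
  assumes \<beta>: "0 \<le> \<beta>" "\<beta> < 1" and C: "C > 0" and n1: "1 \<le> n"
    and hk: "real k \<le> C * real n powr \<beta>"
    and sz: "size CC = n - k" and gr: "\<forall>F\<in>#CC. is_graph (n - 1) F"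
  shows "\<exists>J \<subseteq> {0..<n}. real (card J) \<ge> real n - (100 + 321 * C) * real n powr (3/4 + \<beta>/4) \<and>
          (\<forall>G H. is_graph n G \<and> is_graph n H \<and>
                 image_mset (iso_class (n - 1)) CC \<subseteq># deck n G \<and>
                 image_mset (iso_class (n - 1)) CC \<subseteq># deck n H \<longrightarrow>
                 (\<forall>t\<in>J. deg_count n G t = deg_count n H t))"
proof -
  define g where "g = 3/4 + \<beta>/4"
  have g: "3/4 \<le> g" "g < 1" "1 - g + \<beta> \<le> g" using \<beta> unfolding g_def by auto
  define x where "x = real n"
  have x1: "x \<ge> 1" unfolding x_def using n1 by simp
  have xg1: "x powr g \<ge> 1" using x1 g by (intro ge_one_powr_ge_zero) auto
  have x_split: "x = x powr (1 - g) * x powr g" using x1 by (simp add: powr_add[symmetric])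
  show ?thesis
  proof (cases "x powr (1 - g) < 100 + 4 * C")
    case True
    have "x < (100 + 4 * C) * x powr g"
      using mult_strict_right_mono[OF True, of "x powr g"] xg1 x_split x1 by simp
    also have "\<dots> \<le> (100 + 321 * C) * x powr g" using C xg1 by (intro mult_right_mono) auto
    finally have "real (card {}) \<ge> real n - (100 + 321 * C) * real n powr g" unfolding x_def by simp
    thus ?thesis unfolding g_def by blast
  next
    case False
    hence big: "real n powr (1 - g) \<ge> 100 + 4 * C" unfolding x_def by simp
    define w where "w = nat \<lceil>real n powr g\<rceil>"
    have w: "real n powr g \<le> real w" "real w \<le> real n powr g + 1"
      unfolding w_def using xg1 unfolding x_def by (auto simp: of_nat_nat)
    have "real n powr (1 - g) \<ge> 100" using big C by simp
    note w_props = ceiling_powr_window_width[OF g(1,2) this, folded w_def]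
    note n_props = large_order_bounds[OF g C hk big]
    obtain J where "J \<subseteq> {0..<n}"
        "real (card J) \<ge> real n - (10 * real w + real k + 2 + 2 * ((real n / real w) * (160 * real k + 1)))"
        "\<forall>G H. is_graph n G \<and> is_graph n H \<and>
                 image_mset (iso_class (n - 1)) CC \<subseteq># deck n G \<and>
                 image_mset (iso_class (n - 1)) CC \<subseteq># deck n H \<longrightarrow>
                 (\<forall>t\<in>J. deg_count n G t = deg_count n H t)"
      using partial_deck_determines_most_deg_counts[OF sz gr n_props(2) _ w_props] n_props(1) by auto
    moreover have "(24 + 321 * C) * real n powr g \<le> (100 + 321 * C) * real n powr g"
      using xg1 unfolding x_def by (intro mult_right_mono) auto
    ultimately show ?thesis
      using window_error_le_powr[OF g C n1 hk w] unfolding g_def by (intro exI[of _ J]) auto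
  qed
qed

theorem lemma6:
  fixes \<beta> C :: real
  assumes "0 \<le> \<beta>" and "\<beta> < 1" and "C > 0"
  shows "\<exists>c>0. \<exists>N::nat. \<forall>n\<ge>N. \<forall>k::nat. real k \<le> C * real n powr \<beta> \<longrightarrow>
    (\<forall>\<C> :: nat set set multiset.
       size \<C> = n - k \<and> (\<forall>F\<in>#\<C>. is_graph (n - 1) F) \<longrightarrow>
       (\<exists>J \<subseteq> {0..<n}. real (card J) \<ge> real n - c * real n powr (3/4 + \<beta>/4) \<and>
          (\<forall>G H. is_graph n G \<and> is_graph n H \<and>
                 image_mset (iso_class (n - 1)) \<C> \<subseteq># deck n G \<and>
                 image_mset (iso_class (n - 1)) \<C> \<subseteq># deck n H \<longrightarrow>
                 (\<forall>t\<in>J. deg_count n G t = deg_count n H t))))"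
proof (intro exI[of _ "100 + 321 * C"] conjI exI[of _ 1] allI impI)
  show "100 + 321 * C > 0" using assms by simp
  fix n k and \<C> :: "nat set set multiset"
  assume "1 \<le> n" "real k \<le> C * real n powr \<beta>"
    and "size \<C> = n - k \<and> (\<forall>F\<in>#\<C>. is_graph (n - 1) F)"
  thus "\<exists>J \<subseteq> {0..<n}. real (card J) \<ge> real n - (100 + 321 * C) * real n powr (3/4 + \<beta>/4) \<and>
          (\<forall>G H. is_graph n G \<and> is_graph n H \<and>
                 image_mset (iso_class (n - 1)) \<C> \<subseteq># deck n G \<and>
                 image_mset (iso_class (n - 1)) \<C> \<subseteq># deck n H \<longrightarrow>
                 (\<forall>t\<in>J. deg_count n G t = deg_count n H t))"
    using partial_deck_determines_deg_counts[OF assms] by blast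
qed

end
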